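(* Let $\{x^k\}$ be generated by the MPG algorithm described in the context, and let $k$ be an iteration at which the algorithm does not stop (so $x^{k+1}$, $d^k$, $t_k$ are defined). Suppose the index $j\in\{1,\ldots,m\}$ satisfies $$G_j(x^{k+1})\le G_j(x^k)+t_k\nabla G_j(x^k)^\top d^k+t_k\tfrac{\gamma}{2}\|d^k\|^2.$$ Then: (i) $\psi_{x^k}(p^k)\ge \frac{1}{t_k}\big(F_j(x^{k+1})-F_j(x^k)\big)-\frac{\gamma}{2}\|d^k\|^2$; (ii) for every $x\in\mathrm{dom}(F)$, $$\|x^{k+1}-x\|^2\le\|x^k-x\|^2+2\alpha\big(F_j(x^k)-F_j(x^{k+1})\big)+2\alpha t_k\max_{i=1,\ldots,m}\big(F_i(x)-F_i(x^k)\big)-2\alpha t_k\Big(\frac1\alpha-\frac\gamma2\Big)\|d^k\|^2+t_k^2\|d^k\|^2;$$ (iii) $F_j(x^{k+1})-F_j(x^k)\le -t_k\big(\frac1\alpha-\frac\gamma2\big)\|d^k\|^2$.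
   Context: Let $F:\mathbb{R}^n\to(\mathbb{R}\cup\{+\infty\})^m$, $F=(F_1,\ldots,F_m)$, with $F_j=G_j+H_j$ for $j=1,\ldots,m$, where: (i) each $G_j:\mathbb{R}^n\to\mathbb{R}$ is continuously differentiable and convex; (ii) each $H_j:\mathbb{R}^n\to\mathbb{R}\cup\{+\infty\}$ is proper, convex and continuous on its domain; (iii) $\mathrm{dom}(F):=\{x: F_j(x)<+\infty\ \forall j\}$ is nonempty and closed. For $u,v\in\mathbb{R}^m$, $u\preceq v$ means $u_j\le v_j$ for all $j$. For $x\in\mathrm{dom}(F)$ and $\alpha>0$ define $\psi_x(u):=\max_{j=1,\ldots,m}\big(\nabla G_j(x)^\top(u-x)+H_j(u)-H_j(x)\big)$, $p_\alpha(x):=\arg\min_{u\in\mathbb{R}^n}\psi_x(u)+\frac{1}{2\alpha}\|u-x\|^2$ (unique minimizer), and $\theta_\alpha(x):=\psi_x(p_\alpha(x))+\frac{1}{2\alpha}\|p_\alpha(x)-x\|^2$. MPG algorithm. Step 0: choose $x^0\in\mathrm{dom}(F)$, $\alpha>0$, $\gamma\in(0,2/\alpha)$, $0<\tau_1<\tau_2<1$; set $k=0$. Step 1: compute $p^k:=p_\alpha(x^k)$ and $\theta_\alpha(x^k)$. Step 2: if $\theta_\alpha(x^k)=0$, stop. Step 3: set $d^k:=p^k-x^k$, take $j_k^*\in\arg\max_{j}\nabla G_j(x^k)^\top d^k$, set $t=1$. Step 3.1: if $G_{j_k^*}(x^k+td^k)\le G_{j_k^*}(x^k)+t\nabla G_{j_k^*}(x^k)^\top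 d^k+t\frac{\gamma}{2}\|d^k\|^2$, go to Step 3.2; otherwise replace $t$ by some value in $[\tau_1 t,\tau_2 t]$ and repeat Step 3.1. Step 3.2: if $F(x^k+td^k)\preceq F(x^k)$, set $t_k=t$ and go to Step 4. Step 3.3: replace $t$ by some value in $[\tau_1 t,\tau_2 t]$; if $G_j(x^k+td^k)\le G_j(x^k)+t\nabla G_j(x^k)^\top d^k+t\frac{\gamma}{2}\|d^k\|^2$ for all $j=1,\ldots,m$, set $t_k=t$ and go to Step 4; otherwise repeat Step 3.3. Step 4: $x^{k+1}:=x^k+t_kd^k$, $k\leftarrow k+1$, go to Step 1. *)

theory Defs
  imports "HOL-Analysis.Analysis"
begin

text \<open>Objectives F_j = G_j + H_j, j = 1..m. Each H_j is represented by a real-valued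
function H j together with its effective domain D j (outside D j the value is +infinity).\<close>

definition domF :: "nat \<Rightarrow> (nat \<Rightarrow> 'a set) \<Rightarrow> 'a set" where
  "domF m D = (\<Inter>j\<in>{1..m}. D j)"

definition psi :: "nat \<Rightarrow> (nat \<Rightarrow> 'a \<Rightarrow> 'a::real_inner) \<Rightarrow> (nat \<Rightarrow> 'a \<Rightarrow> real) \<Rightarrow> 'a \<Rightarrow> 'a \<Rightarrow> real" where
  "psi m gradG H x u = Max ((\<lambda>j. gradG j x \<bullet> (u - x) + H j u - H j x) ` {1..m})"

text \<open>The proximal point: the unique minimizer of psi_x(u) + |u-x|^2/(2 alpha).
Outside dom(F) the objective is +infinity, so the minimization is over dom(F).\<close>
definition prox :: "nat \<Rightarrow> (nat \<Rightarrow> 'a \<Rightarrow> 'a::real_inner) \<Rightarrow> (nat \<Rightarrow> 'a \<Rightarrow> real) \<Rightarrow> (nat \<Rightarrow> 'a set)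
    \<Rightarrow> real \<Rightarrow> 'a \<Rightarrow> 'a" where
  "prox m gradG H D \<alpha> x = (THE p. p \<in> domF m D \<and>
     (\<forall>u\<in>domF m D. psi m gradG H x p + (norm (p - x))^2 / (2*\<alpha>)
                    \<le> psi m gradG H x u + (norm (u - x))^2 / (2*\<alpha>)))"

definition theta :: "nat \<Rightarrow> (nat \<Rightarrow> 'a \<Rightarrow> 'a::real_inner) \<Rightarrow> (nat \<Rightarrow> 'a \<Rightarrow> real) \<Rightarrow> (nat \<Rightarrow> 'a set)
    \<Rightarrow> real \<Rightarrow> 'a \<Rightarrow> real" where
  "theta m gradG H D \<alpha> x =
     (let p = prox m gradG H D \<alpha> x in psi m gradG H x p + (norm (p - x))^2 / (2*\<alpha>))"

definition armijo :: "(nat \<Rightarrow> 'a \<Rightarrow> real) \<Rightarrow> (nat \<Rightarrow> 'a \<Rightarrow> 'a::real_inner) \<Rightarrow> real \<Rightarrow> nat \<Rightarrow> 'a \<Rightarrow> 'a \<Rightarrow> real \<Rightarrow> bool" where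
  "armijo G gradG \<gamma> j x d t \<longleftrightarrow>
     G j (x + t *\<^sub>R d) \<le> G j x + t * (gradG j x \<bullet> d) + t * (\<gamma>/2) * (norm d)^2"

definition Fdecr :: "nat \<Rightarrow> (nat \<Rightarrow> 'a \<Rightarrow> real) \<Rightarrow> (nat \<Rightarrow> 'a \<Rightarrow> real) \<Rightarrow> (nat \<Rightarrow> 'a set)
    \<Rightarrow> 'a \<Rightarrow> 'a::real_vector \<Rightarrow> real \<Rightarrow> bool" where
  "Fdecr m G H D x d t \<longleftrightarrow> x + t *\<^sub>R d \<in> domF m D \<and>
     (\<forall>j\<in>{1..m}. G j (x + t *\<^sub>R d) + H j (x + t *\<^sub>R d) \<le> G j x + H j x)"

text \<open>Trial step sizes visited in Step 3.1.\<close>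
inductive ls31 :: "(nat \<Rightarrow> 'a::real_inner \<Rightarrow> real) \<Rightarrow> (nat \<Rightarrow> 'a \<Rightarrow> 'a) \<Rightarrow> real \<Rightarrow> real \<Rightarrow> real \<Rightarrow> 'a \<Rightarrow> 'a \<Rightarrow> nat \<Rightarrow> real \<Rightarrow> bool" for G gradG \<gamma> \<tau>1 \<tau>2 x d js where
  ls31_start: "ls31 G gradG \<gamma> \<tau>1 \<tau>2 x d js 1"
| ls31_back: "ls31 G gradG \<gamma> \<tau>1 \<tau>2 x d js t \<Longrightarrow> \<not> armijo G gradG \<gamma> js x d t \<Longrightarrow>
         \<tau>1 * t \<le> t' \<Longrightarrow> t' \<le> \<tau>2 * t \<Longrightarrow> ls31 G gradG \<gamma> \<tau>1 \<tau>2 x d js t'"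

text \<open>Trial step sizes visited in Step 3.3.\<close>
inductive ls33 for m G gradG H D \<gamma> \<tau>1 \<tau>2 x d js where
  ls33_enter: "ls31 G gradG \<gamma> \<tau>1 \<tau>2 x d js t \<Longrightarrow> armijo G gradG \<gamma> js x d t \<Longrightarrow>
          \<not> Fdecr m G H D x d t \<Longrightarrow> \<tau>1 * t \<le> t' \<Longrightarrow> t' \<le> \<tau>2 * t \<Longrightarrow>
          ls33 m G gradG H D \<gamma> \<tau>1 \<tau>2 x d js t'"
| ls33_back: "ls33 m G gradG H D \<gamma> \<tau>1 \<tau>2 x d js t \<Longrightarrow>
         \<not> (\<forall>j\<in>{1..m}. armijo G gradG \<gamma> j x d t) \<Longrightarrow>
         \<tau>1 * t \<le> t' \<Longrightarrow> t' \<le> \<tau>2 * t \<Longrightarrow> ls33 m G gradG H D \<gamma> \<tau>1 \<tau>2 x d js t'"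

text \<open>Step sizes t_k that the line search (Steps 3.1-3.3) can return.\<close>
definition ls_out where
  "ls_out m G gradG H D \<gamma> \<tau>1 \<tau>2 x d js t \<longleftrightarrow>
     (ls31 G gradG \<gamma> \<tau>1 \<tau>2 x d js t \<and> armijo G gradG \<gamma> js x d t \<and> Fdecr m G H D x d t) \<or>
     (ls33 m G gradG H D \<gamma> \<tau>1 \<tau>2 x d js t \<and> (\<forall>j\<in>{1..m}. armijo G gradG \<gamma> j x d t))"

text \<open>One non-stopping iteration of MPG from x, producing step size t and next iterate x'.\<close>
definition mpg_step where
  "mpg_step m G gradG H D \<alpha> \<gamma> \<tau>1 \<tau>2 x t x' \<longleftrightarrow>
     theta m gradG H D \<alpha> x \<noteq> 0 \<and>
     (let d = prox m gradG H D \<alpha> x - x in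
       (\<exists>js\<in>{1..m}. (\<forall>j\<in>{1..m}. gradG j x \<bullet> d \<le> gradG js x \<bullet> d) \<and>
          ls_out m G gradG H D \<gamma> \<tau>1 \<tau>2 x d js t) \<and>
       x' = x + t *\<^sub>R d)"

end

theory Submission
  imports Defs
begin

(* Write d = p - x for the proximal step from x and F_j = G_j + H_j. The assumed inequality
   for G_j together with convexity of H_j on the segment [x, p] gives the descent estimate
   F_j(x + t d) - F_j(x) <= t psi_x(p) + t (gamma/2) |d|^2, which divided by t is (i).
   Testing the optimality of p against u = x gives psi_x(p) <= -|d|^2/alpha, hence (iii).
   For (ii), expand |x + t d - z|^2; the variational inequality characterising p bounds
   <d, p - z> by alpha (psi_x(z) - psi_x(p)), and the gradient inequality for the convex G_i
   bounds psi_x(z) by max_i (F_i(z) - F_i(x)).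
   All of this needs p to be THE minimiser in the definition of prox: the prox objective is
   continuous and grows quadratically on the closed set dom(F), so a minimiser exists, and
   the variational inequality makes it unique. *)

lemma continuous_on_Max_image:
  fixes f :: "'i \<Rightarrow> 'a::topological_space \<Rightarrow> 'b::linorder_topology"
  assumes "finite I" "I \<noteq> {}" "\<And>i. i \<in> I \<Longrightarrow> continuous_on S (f i)"
  shows "continuous_on S (\<lambda>u. Max ((\<lambda>i. f i u) ` I))"
  using assms
proof (induction I rule: finite_ne_induct)
  case (insert i I)
  then have "continuous_on S (\<lambda>u. max (f i u) (Max ((\<lambda>i. f i u) ` I)))"
    by (intro continuous_on_max) auto
  with insert show ?case by simp
qed simp

lemma convex_on_ge_tangent:
  fixes g :: "'a::real_inner \<Rightarrow> real"
  assumes convex: "convex_on UNIV g" and deriv: "(g has_derivative (\<lambda>h. g' \<bullet> h)) (at x)"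
  shows "g x + g' \<bullet> (u - x) \<le> g u"
proof -
  define \<phi> where "\<phi> s = g (x + s *\<^sub>R (u - x))" for s :: real
  have "convex_on UNIV \<phi>"
  proof
    fix t a b :: real assume "0 < t" "t < 1"
    moreover have "x + ((1 - t) *\<^sub>R a + t *\<^sub>R b) *\<^sub>R (u - x)
        = (1 - t) *\<^sub>R (x + a *\<^sub>R (u - x)) + t *\<^sub>R (x + b *\<^sub>R (u - x))"
      by (simp add: algebra_simps)
    ultimately show "\<phi> ((1 - t) *\<^sub>R a + t *\<^sub>R b) \<le> (1 - t) * \<phi> a + t * \<phi> b"
      unfolding \<phi>_def using convex_onD[OF convex, of t] by auto
  qed simp
  moreover have "(\<phi> has_field_derivative (g' \<bullet> (u - x))) (at 0)"
  proof -
    have "((\<lambda>s::real. x + s *\<^sub>R (u - x)) has_derivative (\<lambda>h. h *\<^sub>R (u - x))) (at 0)"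
      by (auto intro!: derivative_eq_intros)
    moreover have "(g has_derivative (\<lambda>h. g' \<bullet> h)) (at ((\<lambda>s::real. x + s *\<^sub>R (u - x)) 0))"
      using deriv by simp
    ultimately have "(\<phi> has_derivative (\<lambda>h. g' \<bullet> (h *\<^sub>R (u - x)))) (at 0)"
      unfolding \<phi>_def by (rule has_derivative_compose)
    then show ?thesis
      unfolding has_field_derivative_def by (simp add: mult.commute[of _ "g' \<bullet> (u - x)"])
  qed
  ultimately have "g' \<bullet> (u - x) * (1 - 0) \<le> \<phi> 1 - \<phi> 0"
    by (intro convex_on_imp_above_tangent) auto
  then show ?thesis
    unfolding \<phi>_def by simp
qed

lemma convex_on_linear_growth:
  fixes f :: "'a::real_normed_vector \<Rightarrow> real"
  assumes convex: "convex_on S f" and "x \<in> S" "u \<in> S" "1 \<le> norm (u - x)"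
    and sphere: "\<And>v. v \<in> S \<Longrightarrow> norm (v - x) = 1 \<Longrightarrow> c \<le> f v - f x"
  shows "norm (u - x) * c \<le> f u - f x"
proof -
  define r where "r = norm (u - x)"
  have r: "1 \<le> r" "0 < r"
    using assms(4) by (auto simp: r_def)
  define v where "v = (1 - 1/r) *\<^sub>R x + (1/r) *\<^sub>R u"
  have "v \<in> S"
    unfolding v_def using convex_on_imp_convex[OF convex] assms(2,3) r
    by (intro convexD) auto
  moreover have "norm (v - x) = 1"
  proof -
    have "v - x = (1/r) *\<^sub>R (u - x)"
      unfolding v_def by (simp add: algebra_simps)
    then show ?thesis
      using r by (simp add: r_def)
  qed
  ultimately have "c \<le> f v - f x"
    by (rule sphere)
  also have "\<dots> \<le> (1/r) * (f u - f x)"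
    using convex_onD[OF convex, of "1/r" x u] assms(2,3) r
    by (simp add: v_def algebra_simps)
  finally show ?thesis
    using r by (simp add: r_def field_simps)
qed

lemma continuous_attains_inf_coercive:
  fixes f :: "'a::heine_borel \<Rightarrow> real"
  assumes "closed S" "x \<in> S" "continuous_on S f"
    and far: "\<And>u. u \<in> S \<Longrightarrow> R < dist u x \<Longrightarrow> f x < f u"
  shows "\<exists>p\<in>S. \<forall>u\<in>S. f p \<le> f u"
proof -
  define K where "K = S \<inter> cball x (max 0 R)"
  have "compact K" "x \<in> K" "continuous_on K f"
    unfolding K_def using assms(1-3)
    by (auto intro: closed_Int_compact continuous_on_subset)
  then obtain p where "p \<in> K" and p: "\<forall>u\<in>K. f p \<le> f u"
    using continuous_attains_inf by blast
  have "f p \<le> f u" if "u \<in> S" for u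
  proof (cases "u \<in> K")
    case False
    then have "f x < f u"
      using that by (intro far) (auto simp: K_def dist_commute)
    then show ?thesis
      using p \<open>x \<in> K\<close> by fastforce
  qed (use p in blast)
  then show ?thesis
    using \<open>p \<in> K\<close> K_def by blast
qed

lemma power2_norm_add_scaleR:
  fixes a b :: "'a::real_inner"
  shows "(norm (a + s *\<^sub>R b))\<^sup>2 = (norm a)\<^sup>2 + 2 * s * (a \<bullet> b) + s\<^sup>2 * (norm b)\<^sup>2"
  unfolding power2_norm_eq_inner
  by (simp add: inner_add_left inner_add_right inner_commute algebra_simps power2_eq_square)

lemma prox_objective_minimizer_exists:
  fixes \<phi> :: "'a::euclidean_space \<Rightarrow> real"
  assumes "closed S" "convex_on S \<phi>" "continuous_on S \<phi>" "x \<in> S" "\<alpha> > 0"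
  shows "\<exists>p\<in>S. \<forall>u\<in>S. \<phi> p + (norm (p - x))\<^sup>2 / (2*\<alpha>) \<le> \<phi> u + (norm (u - x))\<^sup>2 / (2*\<alpha>)"
proof -
  have "compact (S \<inter> cball x 1)" "x \<in> S \<inter> cball x 1" "continuous_on (S \<inter> cball x 1) \<phi>"
    using assms(1,3,4) by (auto intro: closed_Int_compact continuous_on_subset)
  then obtain v0 where "v0 \<in> S \<inter> cball x 1" and v0: "\<forall>v\<in>S \<inter> cball x 1. \<phi> v0 \<le> \<phi> v"
    using continuous_attains_inf by blast
  (* By convexity phi decays at most linearly away from x, so the quadratic term wins. *)
  define L where "L = \<phi> x - \<phi> v0"
  have "L \<ge> 0"
    using v0 \<open>x \<in> S \<inter> cball x 1\<close> by (simp add: L_def)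
  have growth: "- norm (u - x) * L \<le> \<phi> u - \<phi> x" if "u \<in> S" "1 \<le> norm (u - x)" for u
    using convex_on_linear_growth[OF assms(2) assms(4) that, of "-L"] v0
    by (simp add: L_def dist_norm norm_minus_commute right_diff_distrib)
  show ?thesis
  proof (rule continuous_attains_inf_coercive[OF assms(1,4)])
    show "continuous_on S (\<lambda>u. \<phi> u + (norm (u - x))\<^sup>2 / (2*\<alpha>))"
      using assms(5) by (intro continuous_intros assms(3)) auto
  next
    fix u assume u: "u \<in> S" "2 * \<alpha> * L + 1 < dist u x"
    define r where "r = norm (u - x)"
    have "0 \<le> 2 * \<alpha> * L"
      using \<open>L \<ge> 0\<close> \<open>\<alpha> > 0\<close> by simp
    moreover have "2 * \<alpha> * L + 1 < r"
      using u by (simp add: r_def dist_norm)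
    ultimately have r: "2 * \<alpha> * L < r" "1 \<le> r"
      by linarith+
    then have "r * L < r * (r / (2*\<alpha>))"
      using \<open>\<alpha> > 0\<close> by (intro mult_strict_left_mono) (auto simp: field_simps)
    with growth[OF u(1)] r show "\<phi> x + (norm (x - x))\<^sup>2 / (2*\<alpha>) < \<phi> u + (norm (u - x))\<^sup>2 / (2*\<alpha>)"
      by (simp add: r_def power2_eq_square)
  qed
qed

lemma prox_objective_minimizer_variational_ineq:
  fixes \<phi> :: "'a::real_inner \<Rightarrow> real"
  assumes convex: "convex_on S \<phi>" and "\<alpha> > 0" "p \<in> S" "u \<in> S"
    and min: "\<forall>v\<in>S. \<phi> p + (norm (p - x))\<^sup>2 / (2*\<alpha>) \<le> \<phi> v + (norm (v - x))\<^sup>2 / (2*\<alpha>)"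
  shows "\<phi> p + ((p - x) \<bullet> (p - u)) / \<alpha> \<le> \<phi> u"
proof -
  define A where "A = \<phi> u - \<phi> p + ((p - x) \<bullet> (u - p)) / \<alpha>"
  define B where "B = (norm (u - p))\<^sup>2 / (2*\<alpha>)"
  have "B \<ge> 0"
    using \<open>\<alpha> > 0\<close> by (simp add: B_def)
  have small_step: "0 \<le> A + s * B" if s: "0 < s" "s \<le> 1" for s
  proof -
    define w where "w = (1 - s) *\<^sub>R p + s *\<^sub>R u"
    have "w \<in> S"
      unfolding w_def using convex_on_imp_convex[OF convex] assms(3,4) s by (intro convexD) auto
    have wx: "w - x = (p - x) + s *\<^sub>R (u - p)"
      by (simp add: w_def algebra_simps)
    define c where "c = (2 * s * ((p - x) \<bullet> (u - p)) + s\<^sup>2 * (norm (u - p))\<^sup>2) / (2*\<alpha>)"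
    have "(norm (w - x))\<^sup>2 / (2*\<alpha>) = (norm (p - x))\<^sup>2 / (2*\<alpha>) + c"
      unfolding wx power2_norm_add_scaleR c_def by (simp add: add_divide_distrib)
    then have "\<phi> p \<le> \<phi> w + c"
      using min \<open>w \<in> S\<close> by fastforce
    also have "\<dots> \<le> (1 - s) * \<phi> p + s * \<phi> u + c"
      unfolding w_def using convex_onD[OF convex] assms(3,4) s by auto
    also have "\<dots> = \<phi> p + s * (A + s * B)"
      using \<open>\<alpha> > 0\<close> by (simp add: A_def B_def c_def field_simps power2_eq_square)
    finally have "0 \<le> s * (A + s * B)"
      by simp
    then show ?thesis
      using s by (simp add: zero_le_mult_iff)
  qed
  have "0 \<le> A"
  proof (rule field_le_epsilon)
    fix e :: real assume "0 < e"
    define s where "s = min 1 (e / (B + 1))"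
    have "s * B \<le> e / (B + 1) * B"
      unfolding s_def using \<open>B \<ge> 0\<close> by (intro mult_right_mono) auto
    also have "\<dots> \<le> e"
      using \<open>B \<ge> 0\<close> \<open>0 < e\<close> by (simp add: field_simps)
    finally show "0 \<le> A + e"
      using small_step[of s] \<open>0 < e\<close> \<open>B \<ge> 0\<close> by (simp add: s_def)
  qed
  then show ?thesis
    using \<open>\<alpha> > 0\<close> by (simp add: A_def inner_diff_right field_simps)
qed

lemma prox_objective_minimizer_unique:
  fixes \<phi> :: "'a::real_inner \<Rightarrow> real"
  assumes "convex_on S \<phi>" "\<alpha> > 0" "p \<in> S" "q \<in> S"
    and "\<forall>v\<in>S. \<phi> p + (norm (p - x))\<^sup>2 / (2*\<alpha>) \<le> \<phi> v + (norm (v - x))\<^sup>2 / (2*\<alpha>)"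
    and "\<forall>v\<in>S. \<phi> q + (norm (q - x))\<^sup>2 / (2*\<alpha>) \<le> \<phi> v + (norm (v - x))\<^sup>2 / (2*\<alpha>)"
  shows "p = q"
proof -
  have "((p - x) \<bullet> (p - q)) / \<alpha> + ((q - x) \<bullet> (q - p)) / \<alpha> \<le> 0"
    using prox_objective_minimizer_variational_ineq[OF assms(1,2,3,4,5)]
      prox_objective_minimizer_variational_ineq[OF assms(1,2,4,3,6)] by linarith
  moreover have "(p - x) \<bullet> (p - q) + (q - x) \<bullet> (q - p) = (p - q) \<bullet> (p - q)"
    by (simp add: algebra_simps inner_diff_left inner_diff_right inner_commute)
  ultimately have "(p - q) \<bullet> (p - q) \<le> 0"
    using \<open>\<alpha> > 0\<close> by (simp add: add_divide_distrib[symmetric] divide_le_0_iff)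
  then show ?thesis
    using inner_ge_zero[of "p - q"] by simp
qed

lemma step_dist_estimate:
  fixes x p z :: "'a::real_inner"
  assumes "\<alpha> > 0" "0 \<le> t"
    and vi: "P + ((p - x) \<bullet> (p - z)) / \<alpha> \<le> M"
    and descent: "F' - F \<le> t * P + t * (\<gamma> / 2) * (norm (p - x))\<^sup>2"
  shows "(norm (x + t *\<^sub>R (p - x) - z))\<^sup>2 \<le> (norm (x - z))\<^sup>2 + 2 * \<alpha> * (F - F') + 2 * \<alpha> * t * M
           - 2 * \<alpha> * t * (1 / \<alpha> - \<gamma> / 2) * (norm (p - x))\<^sup>2 + t\<^sup>2 * (norm (p - x))\<^sup>2"
proof -
  have expand: "(norm (x + t *\<^sub>R (p - x) - z))\<^sup>2
      = (norm (x - z))\<^sup>2 + 2 * t * ((x - z) \<bullet> (p - x)) + t\<^sup>2 * (norm (p - x))\<^sup>2"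
    using power2_norm_add_scaleR[of "x - z" t "p - x"] by (simp add: algebra_simps)
  have "(p - x) \<bullet> (p - z) = (norm (p - x))\<^sup>2 + (x - z) \<bullet> (p - x)"
    by (simp add: power2_norm_eq_inner inner_diff_left inner_diff_right inner_commute)
  moreover have "(p - x) \<bullet> (p - z) \<le> \<alpha> * (M - P)"
    using vi \<open>\<alpha> > 0\<close> by (simp add: field_simps)
  ultimately have "2 * t * ((x - z) \<bullet> (p - x)) \<le> 2 * t * (\<alpha> * (M - P) - (norm (p - x))\<^sup>2)"
    using \<open>0 \<le> t\<close> by (intro mult_left_mono) auto
  moreover have "2 * \<alpha> * (F' - F) \<le> 2 * \<alpha> * (t * P + t * (\<gamma> / 2) * (norm (p - x))\<^sup>2)"
    using descent \<open>\<alpha> > 0\<close> by (intro mult_left_mono) auto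
  ultimately show ?thesis
    unfolding expand using \<open>\<alpha> > 0\<close> by (simp add: algebra_simps)
qed

lemma psi_ge:
  assumes "i \<in> {1..m}"
  shows "gradG i x \<bullet> (u - x) + H i u - H i x \<le> psi m gradG H x u"
  unfolding psi_def using assms by (intro Max_ge) auto

lemma psi_le:
  assumes "m \<ge> 1" "\<And>i. i \<in> {1..m} \<Longrightarrow> gradG i x \<bullet> (u - x) + H i u - H i x \<le> c"
  shows "psi m gradG H x u \<le> c"
  unfolding psi_def using assms by (subst Max_le_iff) auto

lemma psi_self:
  assumes "m \<ge> 1"
  shows "psi m gradG H x x = 0"
proof -
  have "(\<lambda>j. gradG j x \<bullet> (x - x) + H j x - H j x) ` {1..m} = {0}"
    using assms by auto
  then show ?thesis
    unfolding psi_def by simp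
qed

lemma domF_subset: "i \<in> {1..m} \<Longrightarrow> domF m D \<subseteq> D i"
  unfolding domF_def by auto

lemma convex_on_psi:
  assumes "m \<ge> 1" and H: "\<forall>i\<in>{1..m}. convex_on (D i) (H i)"
  shows "convex_on (domF m D) (psi m gradG H x)"
proof
  have "convex (D i)" if "i \<in> {1..m}" for i
    using H that convex_on_imp_convex by blast
  then show "convex (domF m D)"
    unfolding domF_def by (auto intro: convex_INT)
next
  fix s :: real and u v assume s: "0 < s" "s < 1" and uv: "u \<in> domF m D" "v \<in> domF m D"
  show "psi m gradG H x ((1 - s) *\<^sub>R u + s *\<^sub>R v)
      \<le> (1 - s) * psi m gradG H x u + s * psi m gradG H x v"
  proof (rule psi_le[OF \<open>m \<ge> 1\<close>])
    fix i assume i: "i \<in> {1..m}"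
    have "H i ((1 - s) *\<^sub>R u + s *\<^sub>R v) \<le> (1 - s) * H i u + s * H i v"
      using convex_onD[of "D i" "H i" s u v] H i uv s domF_subset[OF i, of D] by auto
    moreover have "(1 - s) * (gradG i x \<bullet> (u - x) + H i u - H i x) \<le> (1 - s) * psi m gradG H x u"
      using s by (intro mult_left_mono psi_ge[OF i]) auto
    moreover have "s * (gradG i x \<bullet> (v - x) + H i v - H i x) \<le> s * psi m gradG H x v"
      using s by (intro mult_left_mono psi_ge[OF i]) auto
    ultimately show "gradG i x \<bullet> ((1 - s) *\<^sub>R u + s *\<^sub>R v - x) + H i ((1 - s) *\<^sub>R u + s *\<^sub>R v) - H i x
        \<le> (1 - s) * psi m gradG H x u + s * psi m gradG H x v"
      by (simp add: algebra_simps inner_diff_right)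
  qed
qed

lemma continuous_on_psi:
  assumes "m \<ge> 1" and H: "\<forall>i\<in>{1..m}. continuous_on (D i) (H i)"
  shows "continuous_on (domF m D) (psi m gradG H x)"
  unfolding psi_def
proof (rule continuous_on_Max_image[where f = "\<lambda>i u. gradG i x \<bullet> (u - x) + H i u - H i x"])
  fix i assume i: "i \<in> {1..m}"
  have "continuous_on (domF m D) (H i)"
    using continuous_on_subset[OF bspec[OF H i] domF_subset[OF i, of D]] .
  then show "continuous_on (domF m D) (\<lambda>u. gradG i x \<bullet> (u - x) + H i u - H i x)"
    by (intro continuous_intros)
qed (use \<open>m \<ge> 1\<close> in auto)

lemma F_diff_le_psi:
  assumes "j \<in> {1..m}" "convex_on S (H j)" "x \<in> S" "p \<in> S" "0 \<le> t" "t \<le> 1"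
    and G_step: "G j (x + t *\<^sub>R (p - x))
        \<le> G j x + t * (gradG j x \<bullet> (p - x)) + t * (\<gamma> / 2) * (norm (p - x))\<^sup>2"
  shows "(G j (x + t *\<^sub>R (p - x)) + H j (x + t *\<^sub>R (p - x))) - (G j x + H j x)
           \<le> t * psi m gradG H x p + t * (\<gamma> / 2) * (norm (p - x))\<^sup>2"
proof -
  have "H j (x + t *\<^sub>R (p - x)) \<le> (1 - t) * H j x + t * H j p"
    using convex_onD[OF assms(2), of t x p] assms(3-6) by (simp add: algebra_simps)
  moreover have "t * (gradG j x \<bullet> (p - x) + H j p - H j x) \<le> t * psi m gradG H x p"
    using assms(5) by (intro mult_left_mono psi_ge[OF assms(1)])
  ultimately show ?thesis
    using G_step by (simp add: algebra_simps)
qed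

lemma psi_le_Max_F_diff:
  assumes "m \<ge> 1" "\<forall>i\<in>{1..m}. convex_on UNIV (G i)"
    and "\<forall>i\<in>{1..m}. (G i has_derivative (\<lambda>h. gradG i x \<bullet> h)) (at x)"
  shows "psi m gradG H x z \<le> Max ((\<lambda>i. (G i z + H i z) - (G i x + H i x)) ` {1..m})"
proof (rule psi_le[OF assms(1)])
  fix i assume i: "i \<in> {1..m}"
  have "G i x + gradG i x \<bullet> (z - x) \<le> G i z"
    using convex_on_ge_tangent assms(2,3) i by blast
  moreover have "(G i z + H i z) - (G i x + H i x) \<le> Max ((\<lambda>i. (G i z + H i z) - (G i x + H i x)) ` {1..m})"
    using i by (intro Max_ge) auto
  ultimately show "gradG i x \<bullet> (z - x) + H i z - H i x
      \<le> Max ((\<lambda>i. (G i z + H i z) - (G i x + H i x)) ` {1..m})"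
    by simp
qed

lemma backtracking_step_bounds:
  fixes t t' \<tau>1 \<tau>2 :: real
  assumes "0 < t" "t \<le> 1" "0 < \<tau>1" "\<tau>2 \<le> 1" "\<tau>1 * t \<le> t'" "t' \<le> \<tau>2 * t"
  shows "0 < t' \<and> t' \<le> 1"
proof -
  have "0 < \<tau>1 * t" "\<tau>2 * t \<le> 1 * t"
    using assms by (auto intro: mult_right_mono)
  with assms show ?thesis
    by linarith
qed

lemma ls31_step_bounds:
  assumes "ls31 G gradG \<gamma> \<tau>1 \<tau>2 x d js t" "0 < \<tau>1" "\<tau>2 \<le> 1"
  shows "0 < t \<and> t \<le> 1"
  using assms
proof induction
  case (ls31_back t t')
  then show ?case
    using backtracking_step_bounds by blast
qed simp

lemma ls33_step_bounds:
  assumes "ls33 m G gradG H D \<gamma> \<tau>1 \<tau>2 x d js t" "0 < \<tau>1" "\<tau>2 \<le> 1"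
  shows "0 < t \<and> t \<le> 1"
  using assms
proof induction
  case (ls33_enter t t')
  then show ?case
    using backtracking_step_bounds ls31_step_bounds by blast
next
  case (ls33_back t t')
  then show ?case
    using backtracking_step_bounds by blast
qed

lemma mpg_step_iterate:
  assumes "mpg_step m G gradG H D \<alpha> \<gamma> \<tau>1 \<tau>2 x t x'" "0 < \<tau>1" "\<tau>2 \<le> 1"
  shows "0 < t" "t \<le> 1" "x' = x + t *\<^sub>R (prox m gradG H D \<alpha> x - x)"
proof -
  from assms(1) obtain js where
    "ls_out m G gradG H D \<gamma> \<tau>1 \<tau>2 x (prox m gradG H D \<alpha> x - x) js t"
    and "x' = x + t *\<^sub>R (prox m gradG H D \<alpha> x - x)"
    unfolding mpg_step_def Let_def by blast
  then show "0 < t" "t \<le> 1" "x' = x + t *\<^sub>R (prox m gradG H D \<alpha> x - x)"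
    unfolding ls_out_def
    using ls31_step_bounds[OF _ assms(2,3)] ls33_step_bounds[OF _ assms(2,3)] by blast+
qed

context
  fixes m :: nat and H :: "nat \<Rightarrow> 'a::euclidean_space \<Rightarrow> real" and D :: "nat \<Rightarrow> 'a set"
  assumes m_pos: "m \<ge> 1"
    and H_convex: "\<forall>i\<in>{1..m}. convex_on (D i) (H i)"
    and H_cont: "\<forall>i\<in>{1..m}. continuous_on (D i) (H i)"
    and dom_closed: "closed (domF m D)"
begin

lemma prox_minimizes:
  fixes x :: 'a
  assumes "x \<in> domF m D" "\<alpha> > 0"
  shows "prox m gradG H D \<alpha> x \<in> domF m D"
    and "\<forall>u\<in>domF m D. psi m gradG H x (prox m gradG H D \<alpha> x) + (norm (prox m gradG H D \<alpha> x - x))\<^sup>2 / (2*\<alpha>)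
           \<le> psi m gradG H x u + (norm (u - x))\<^sup>2 / (2*\<alpha>)"
proof -
  note convex = convex_on_psi[OF m_pos H_convex, of gradG x]
  obtain p where p: "p \<in> domF m D"
    and p_min: "\<forall>u\<in>domF m D. psi m gradG H x p + (norm (p - x))\<^sup>2 / (2*\<alpha>)
                  \<le> psi m gradG H x u + (norm (u - x))\<^sup>2 / (2*\<alpha>)"
    using prox_objective_minimizer_exists[OF dom_closed convex continuous_on_psi[OF m_pos H_cont] assms]
    by blast
  have "prox m gradG H D \<alpha> x = p"
    unfolding prox_def
  proof (rule the_equality)
    fix q assume "q \<in> domF m D \<and> (\<forall>u\<in>domF m D. psi m gradG H x q + (norm (q - x))\<^sup>2 / (2*\<alpha>)
                  \<le> psi m gradG H x u + (norm (u - x))\<^sup>2 / (2*\<alpha>))"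
    then show "q = p"
      using prox_objective_minimizer_unique[OF convex assms(2) _ p _ p_min] by blast
  qed (use p p_min in blast)
  with p p_min show "prox m gradG H D \<alpha> x \<in> domF m D"
    and "\<forall>u\<in>domF m D. psi m gradG H x (prox m gradG H D \<alpha> x) + (norm (prox m gradG H D \<alpha> x - x))\<^sup>2 / (2*\<alpha>)
           \<le> psi m gradG H x u + (norm (u - x))\<^sup>2 / (2*\<alpha>)"
    by simp_all
qed

lemma prox_variational_ineq:
  fixes x :: 'a
  assumes "x \<in> domF m D" "\<alpha> > 0" "u \<in> domF m D"
  shows "psi m gradG H x (prox m gradG H D \<alpha> x)
           + ((prox m gradG H D \<alpha> x - x) \<bullet> (prox m gradG H D \<alpha> x - u)) / \<alpha> \<le> psi m gradG H x u"
  using prox_objective_minimizer_variational_ineq[OF convex_on_psi[OF m_pos H_convex] assms(2)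
      prox_minimizes(1)[OF assms(1,2)] assms(3) prox_minimizes(2)[OF assms(1,2)]] .

lemma psi_prox_le:
  fixes x :: 'a
  assumes "x \<in> domF m D" "\<alpha> > 0"
  shows "psi m gradG H x (prox m gradG H D \<alpha> x) \<le> - (norm (prox m gradG H D \<alpha> x - x))\<^sup>2 / \<alpha>"
  using prox_variational_ineq[OF assms assms(1), of gradG] psi_self[OF m_pos, of gradG H x]
  by (simp add: power2_norm_eq_inner)

lemma mpg_iterates_in_domF:
  fixes xs :: "nat \<Rightarrow> 'a"
  assumes "\<alpha> > 0" "0 < \<tau>1" "\<tau>2 \<le> 1" "xs 0 \<in> domF m D"
    and "\<And>i. i < k \<Longrightarrow> mpg_step m G gradG H D \<alpha> \<gamma> \<tau>1 \<tau>2 (xs i) (ts i) (xs (Suc i))"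
  shows "xs k \<in> domF m D"
  using assms(5)
proof (induction k)
  case (Suc k)
  then have x: "xs k \<in> domF m D"
    by simp
  note step = mpg_step_iterate[OF Suc.prems[of k] assms(2,3)]
  have "xs (Suc k) = (1 - ts k) *\<^sub>R xs k + ts k *\<^sub>R prox m gradG H D \<alpha> (xs k)"
    using step(3) by (simp add: algebra_simps)
  then show ?case
    using convexD[OF convex_on_imp_convex[OF convex_on_psi[OF m_pos H_convex]] x
        prox_minimizes(1)[OF x assms(1)]] step(1,2)
    by simp
qed (use assms(4) in simp)

lemma prox_step_dist_le:
  fixes x :: 'a and gradG :: "nat \<Rightarrow> 'a \<Rightarrow> 'a" and \<alpha> :: real
  defines "p \<equiv> prox m gradG H D \<alpha> x"
  assumes x: "x \<in> domF m D" and "\<alpha> > 0" "0 \<le> t" and z: "z \<in> domF m D"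
    and G_convex: "\<forall>i\<in>{1..m}. convex_on UNIV (G i)"
    and G_grad: "\<forall>i\<in>{1..m}. (G i has_derivative (\<lambda>h. gradG i x \<bullet> h)) (at x)"
    and descent: "F' - F \<le> t * psi m gradG H x p + t * (\<gamma> / 2) * (norm (p - x))\<^sup>2"
  shows "(norm (x + t *\<^sub>R (p - x) - z))\<^sup>2 \<le> (norm (x - z))\<^sup>2 + 2 * \<alpha> * (F - F')
      + 2 * \<alpha> * t * Max ((\<lambda>i. (G i z + H i z) - (G i x + H i x)) ` {1..m})
      - 2 * \<alpha> * t * (1 / \<alpha> - \<gamma> / 2) * (norm (p - x))\<^sup>2 + t\<^sup>2 * (norm (p - x))\<^sup>2"
proof (rule step_dist_estimate[OF \<open>\<alpha> > 0\<close> \<open>0 \<le> t\<close> _ descent])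
  have "psi m gradG H x p + ((p - x) \<bullet> (p - z)) / \<alpha> \<le> psi m gradG H x z"
    unfolding p_def using prox_variational_ineq[OF x \<open>\<alpha> > 0\<close> z] .
  also have "\<dots> \<le> Max ((\<lambda>i. (G i z + H i z) - (G i x + H i x)) ` {1..m})"
    by (rule psi_le_Max_F_diff[where gradG = gradG and x = x, OF m_pos G_convex G_grad])
  finally show "psi m gradG H x p + ((p - x) \<bullet> (p - z)) / \<alpha>
      \<le> Max ((\<lambda>i. (G i z + H i z) - (G i x + H i x)) ` {1..m})" .
qed

lemma prox_step_estimates:
  fixes x :: 'a and gradG :: "nat \<Rightarrow> 'a \<Rightarrow> 'a" and \<alpha> :: real
  defines "p \<equiv> prox m gradG H D \<alpha> x"
  assumes x: "x \<in> domF m D" and "\<alpha> > 0" "0 < t" "t \<le> 1" and j: "j \<in> {1..m}"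
    and G_convex: "\<forall>i\<in>{1..m}. convex_on UNIV (G i)"
    and G_grad: "\<forall>i\<in>{1..m}. (G i has_derivative (\<lambda>h. gradG i x \<bullet> h)) (at x)"
    and G_step: "G j (x + t *\<^sub>R (p - x))
        \<le> G j x + t * (gradG j x \<bullet> (p - x)) + t * (\<gamma> / 2) * (norm (p - x))\<^sup>2"
  shows "(1 / t) * ((G j (x + t *\<^sub>R (p - x)) + H j (x + t *\<^sub>R (p - x))) - (G j x + H j x))
           - (\<gamma> / 2) * (norm (p - x))\<^sup>2 \<le> psi m gradG H x p"
    and "\<forall>z\<in>domF m D. (norm (x + t *\<^sub>R (p - x) - z))\<^sup>2 \<le> (norm (x - z))\<^sup>2
           + 2 * \<alpha> * ((G j x + H j x) - (G j (x + t *\<^sub>R (p - x)) + H j (x + t *\<^sub>R (p - x))))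
           + 2 * \<alpha> * t * Max ((\<lambda>i. (G i z + H i z) - (G i x + H i x)) ` {1..m})
           - 2 * \<alpha> * t * (1 / \<alpha> - \<gamma> / 2) * (norm (p - x))\<^sup>2 + t\<^sup>2 * (norm (p - x))\<^sup>2"
    and "(G j (x + t *\<^sub>R (p - x)) + H j (x + t *\<^sub>R (p - x))) - (G j x + H j x)
           \<le> - t * (1 / \<alpha> - \<gamma> / 2) * (norm (p - x))\<^sup>2"
proof -
  have p: "p \<in> domF m D"
    unfolding p_def using prox_minimizes(1)[OF x \<open>\<alpha> > 0\<close>] .
  have descent: "(G j (x + t *\<^sub>R (p - x)) + H j (x + t *\<^sub>R (p - x))) - (G j x + H j x)
      \<le> t * psi m gradG H x p + t * (\<gamma> / 2) * (norm (p - x))\<^sup>2"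
    using x p domF_subset[OF j, of D] \<open>0 < t\<close> \<open>t \<le> 1\<close>
    by (intro F_diff_le_psi[where G = G and gradG = gradG and H = H, OF j bspec[OF H_convex j]
          _ _ _ _ G_step]) auto
  have "(1 / t) * ((G j (x + t *\<^sub>R (p - x)) + H j (x + t *\<^sub>R (p - x))) - (G j x + H j x))
      \<le> (1 / t) * (t * psi m gradG H x p + t * (\<gamma> / 2) * (norm (p - x))\<^sup>2)"
    using descent \<open>0 < t\<close> by (intro mult_left_mono) auto
  also have "\<dots> = psi m gradG H x p + (\<gamma> / 2) * (norm (p - x))\<^sup>2"
    using \<open>0 < t\<close> by (simp add: field_simps)
  finally show "(1 / t) * ((G j (x + t *\<^sub>R (p - x)) + H j (x + t *\<^sub>R (p - x))) - (G j x + H j x))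
      - (\<gamma> / 2) * (norm (p - x))\<^sup>2 \<le> psi m gradG H x p"
    by simp
  show "\<forall>z\<in>domF m D. (norm (x + t *\<^sub>R (p - x) - z))\<^sup>2 \<le> (norm (x - z))\<^sup>2
      + 2 * \<alpha> * ((G j x + H j x) - (G j (x + t *\<^sub>R (p - x)) + H j (x + t *\<^sub>R (p - x))))
      + 2 * \<alpha> * t * Max ((\<lambda>i. (G i z + H i z) - (G i x + H i x)) ` {1..m})
      - 2 * \<alpha> * t * (1 / \<alpha> - \<gamma> / 2) * (norm (p - x))\<^sup>2 + t\<^sup>2 * (norm (p - x))\<^sup>2"
    using prox_step_dist_le[OF x \<open>\<alpha> > 0\<close> _ _ G_convex G_grad descent[unfolded p_def]] \<open>0 < t\<close>
    by (simp add: p_def)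
  have "t * psi m gradG H x p \<le> t * (- (norm (p - x))\<^sup>2 / \<alpha>)"
    unfolding p_def using psi_prox_le[OF x \<open>\<alpha> > 0\<close>] \<open>0 < t\<close> by (intro mult_left_mono) auto
  with descent show "(G j (x + t *\<^sub>R (p - x)) + H j (x + t *\<^sub>R (p - x))) - (G j x + H j x)
      \<le> - t * (1 / \<alpha> - \<gamma> / 2) * (norm (p - x))\<^sup>2"
    by (simp add: algebra_simps)
qed
end

theorem mainTheorem2:
  fixes G :: "nat \<Rightarrow> 'a::euclidean_space \<Rightarrow> real"
    and gradG :: "nat \<Rightarrow> 'a \<Rightarrow> 'a"
    and H :: "nat \<Rightarrow> 'a \<Rightarrow> real"
    and D :: "nat \<Rightarrow> 'a set"
    and m :: nat and \<alpha> \<gamma> \<tau>1 \<tau>2 :: real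
    and xs :: "nat \<Rightarrow> 'a" and ts :: "nat \<Rightarrow> real" and k j :: nat
  assumes m_pos: "m \<ge> 1"
    and G_grad: "\<forall>i\<in>{1..m}. \<forall>x. (G i has_derivative (\<lambda>h. gradG i x \<bullet> h)) (at x)"
    and G_C1: "\<forall>i\<in>{1..m}. continuous_on UNIV (gradG i)"
    and G_convex: "\<forall>i\<in>{1..m}. convex_on UNIV (G i)"
    and H_proper: "\<forall>i\<in>{1..m}. D i \<noteq> {}"
    and H_convex: "\<forall>i\<in>{1..m}. convex (D i) \<and> convex_on (D i) (H i)"
    and H_cont: "\<forall>i\<in>{1..m}. continuous_on (D i) (H i)"
    and dom_ne: "domF m D \<noteq> {}"
    and dom_closed: "closed (domF m D)"
    and alpha_pos: "\<alpha> > 0"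
    and gamma: "0 < \<gamma>" "\<gamma> < 2 / \<alpha>"
    and taus: "0 < \<tau>1" "\<tau>1 < \<tau>2" "\<tau>2 < 1"
    and x0: "xs 0 \<in> domF m D"
    and iter: "\<forall>i\<le>k. mpg_step m G gradG H D \<alpha> \<gamma> \<tau>1 \<tau>2 (xs i) (ts i) (xs (Suc i))"
    and j_idx: "j \<in> {1..m}"
    and j_ineq: "G j (xs (Suc k)) \<le> G j (xs k)
        + ts k * (gradG j (xs k) \<bullet> (prox m gradG H D \<alpha> (xs k) - xs k))
        + ts k * (\<gamma> / 2) * (norm (prox m gradG H D \<alpha> (xs k) - xs k))^2"
  shows "(psi m gradG H (xs k) (prox m gradG H D \<alpha> (xs k))
           \<ge> (1 / ts k) * ((G j (xs (Suc k)) + H j (xs (Suc k))) - (G j (xs k) + H j (xs k)))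
             - (\<gamma> / 2) * (norm (prox m gradG H D \<alpha> (xs k) - xs k))^2)
    \<and> (\<forall>x\<in>domF m D.
           (norm (xs (Suc k) - x))^2 \<le> (norm (xs k - x))^2
             + 2 * \<alpha> * ((G j (xs k) + H j (xs k)) - (G j (xs (Suc k)) + H j (xs (Suc k))))
             + 2 * \<alpha> * ts k * Max ((\<lambda>i. (G i x + H i x) - (G i (xs k) + H i (xs k))) ` {1..m})
             - 2 * \<alpha> * ts k * (1 / \<alpha> - \<gamma> / 2) * (norm (prox m gradG H D \<alpha> (xs k) - xs k))^2
             + (ts k)^2 * (norm (prox m gradG H D \<alpha> (xs k) - xs k))^2)
    \<and> ((G j (xs (Suc k)) + H j (xs (Suc k))) - (G j (xs k) + H j (xs k))
           \<le> - ts k * (1 / \<alpha> - \<gamma> / 2) * (norm (prox m gradG H D \<alpha> (xs k) - xs k))^2)"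
proof -
  have H_cvx: "\<forall>i\<in>{1..m}. convex_on (D i) (H i)"
    using H_convex by blast
  note taus' = taus(1) less_imp_le[OF taus(3)]
  have x: "xs k \<in> domF m D"
    using iter by (intro mpg_iterates_in_domF[where xs = xs and ts = ts and G = G and gradG = gradG and \<gamma> = \<gamma>,
        OF m_pos H_cvx H_cont dom_closed alpha_pos taus' x0]) auto
  obtain "0 < ts k" "ts k \<le> 1"
    and x': "xs (Suc k) = xs k + ts k *\<^sub>R (prox m gradG H D \<alpha> (xs k) - xs k)"
    using mpg_step_iterate[OF iter[rule_format, OF le_refl] taus'] by blast
  from G_grad have "\<forall>i\<in>{1..m}. (G i has_derivative (\<lambda>h. gradG i (xs k) \<bullet> h)) (at (xs k))"
    by blast
  from prox_step_estimates[OF m_pos H_cvx H_cont dom_closed x alpha_pos \<open>0 < ts k\<close> \<open>ts k \<le> 1\<close>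
      j_idx G_convex this j_ineq[unfolded x']]
  show ?thesis
    unfolding x' by blast
qed

end
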